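(* Let $X\sim\mathbb{P}$ be a random element of a sample space $\mathcal{X}$, let $G$ be a compact topological group acting on $\mathcal{X}$ (written $(g,x)\mapsto gx$), and let $\mathbb{Q}$ be the Haar probability measure on $G$. Assume exact invariance: for $\mathbb{Q}$-almost all $g\in G$, $gX$ has the same distribution as $X$. Let $f:\mathcal{X}\to\mathbb{R}^k$ be a function such that the map $(x,g)\mapsto f(gx)$ belongs to $L^2(\mathbb{P}\times\mathbb{Q})$, and define the orbit average $\bar f(x):=\mathbb{E}_{g\sim\mathbb{Q}} f(gx)$. Then: 1. For any $x$, $\bar f(x)=\mathbb{E}[f(X)\mid X\in Gx]$, where $Gx=\{gx:g\in G\}$ is the orbit of $x$; i.e., $\bar f$ is the conditional expectation of $f(X)$ given the orbit of $X$. 2. $\mathbb{E}_{X\sim\mathbb{P}} f(X)=\mathbb{E}_{X\sim\mathbb{P}}\bar f(X)$. 3. $\mathrm{Cov}_{X\sim\mathbb{P}} f(X)=\mathrm{Cov}_{X\sim\mathbb{P}}\bar f(X)+\mathbb{E}_{X\sim\mathbb{P}}\mathrm{Cov}_{g\sim\mathbb{Q}} f(gX)$. 4. For any real-valued convex function $\varphi$ on $\mathbb{R}^k$, $\mathbb{E}_{X\sim\mathbb{P}}[\varphi(f(X))]\ge \mathbb{E}_{X\sim\mathbb{P}}[\varphi(\bar f(X))]$.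
   Context: A group action satisfies $ex=x$ for the identity $e$ and $(gh)x=g(hx)$. The Haar probability measure $\mathbb{Q}$ is translation invariant: $\mathbb{Q}(gS)=\mathbb{Q}(Sg)=\mathbb{Q}(S)$ for all $g\in G$ and measurable $S\subseteq G$. $\mathrm{Cov}_{g\sim\mathbb{Q}} f(gX)$ denotes the covariance matrix of $f(gX)$ over $g\sim\mathbb{Q}$ with $X$ held fixed. *)

theory Defs
  imports "HOL-Probability.Probability" "HOL-Algebra.Group_Action" "HOL-Algebra.Coset"
begin

definition compact_topological_group :: "('g, 'b) monoid_scheme \<Rightarrow> 'g topology \<Rightarrow> bool" where
  "compact_topological_group G T \<longleftrightarrow>
     group G \<and> topspace T = carrier G \<and>
     continuous_map (prod_topology T T) T (\<lambda>(a, b). a \<otimes>\<^bsub>G\<^esub> b) \<and>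
     continuous_map T T (\<lambda>a. inv\<^bsub>G\<^esub> a) \<and>
     compact_space T"

definition haar_probability :: "('g, 'b) monoid_scheme \<Rightarrow> 'g topology \<Rightarrow> 'g measure \<Rightarrow> bool" where
  "haar_probability G T Q \<longleftrightarrow>
     prob_space Q \<and>
     sets Q = sigma_sets (topspace T) {U. openin T U} \<and>
     space Q = topspace T \<and>
     (\<forall>g \<in> carrier G. \<forall>S \<in> sets Q.
        measure Q (g <#\<^bsub>G\<^esub> S) = measure Q S \<and> measure Q (S #>\<^bsub>G\<^esub> g) = measure Q S)"

definition orbit_avg :: "'g measure \<Rightarrow> ('g \<Rightarrow> 'x \<Rightarrow> 'x) \<Rightarrow> ('x \<Rightarrow> real^'k) \<Rightarrow> 'x \<Rightarrow> real^'k" where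
  "orbit_avg Q act f x = (LINT g|Q. f (act g x))"

definition orbit_sigma :: "'x measure \<Rightarrow> ('g, 'b) monoid_scheme \<Rightarrow> ('g \<Rightarrow> 'x \<Rightarrow> 'x) \<Rightarrow> 'x measure" where
  "orbit_sigma P G act =
     sigma (space P) {A \<in> sets P. \<forall>x \<in> A. orbit G act x \<subseteq> A}"

definition cov_mat :: "'a measure \<Rightarrow> ('a \<Rightarrow> real^'k) \<Rightarrow> real^'k^'k" where
  "cov_mat M h = (\<chi> i j. LINT x|M. (h x $ i - (LINT y|M. h y $ i)) * (h x $ j - (LINT y|M. h y $ j)))"

end

theory Submission
  imports Defs
begin

(* Since gX has the law of X for Q-almost every g, Fubini on P x Q turns the integral of any
   h(gX) over (X, g) into the integral of h(X); in particular E fbar(X) = E f(X). Right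
   invariance of the Haar measure makes fbar constant on orbits, hence measurable for the orbit
   sigma-algebra, and for an orbit-closed set A the same transfer gives
   E[1_A f(X)] = E[1_A(gX) f(gX)] = E[1_A fbar(X)], so fbar is the conditional expectation.
   The covariance identity is the law of total covariance for the pair (X, g), computed
   entrywise, and the last statement is Jensen's inequality for the inner integral over g, with
   an affine minorant of phi giving the integrability of phi o fbar. *)

lemma convex_strict_epigraph:
  assumes "convex_on UNIV \<phi>"
  shows "convex {z. \<phi> (fst z) < snd z}"
proof (rule convexI)
  fix x y :: "'a \<times> real" and u v :: real
  assume x: "x \<in> {z. \<phi> (fst z) < snd z}" and y: "y \<in> {z. \<phi> (fst z) < snd z}"
    and uv: "0 \<le> u" "0 \<le> v" "u + v = 1"
  have "\<phi> (u *\<^sub>R fst x + v *\<^sub>R fst y) \<le> u * \<phi> (fst x) + v * \<phi> (fst y)"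
    using assms uv unfolding convex_on_def by blast
  also have "\<dots> < u * snd x + v * snd y"
  proof (cases "u = 0")
    case True
    then show ?thesis using y uv by simp
  next
    case False
    then have "u * \<phi> (fst x) < u * snd x" using x uv by simp
    moreover have "v * \<phi> (fst y) \<le> v * snd y" using y uv by (simp add: mult_left_mono)
    ultimately show ?thesis by linarith
  qed
  finally show "u *\<^sub>R x + v *\<^sub>R y \<in> {z. \<phi> (fst z) < snd z}" by simp
qed

lemma convex_on_subgradient:
  fixes \<phi> :: "'a::euclidean_space \<Rightarrow> real"
  assumes "convex_on UNIV \<phi>"
  obtains a where "\<And>y. \<phi> c + inner a (y - c) \<le> \<phi> y"
proof -
  have "\<exists>d b. d \<noteq> 0 \<and> (\<forall>z\<in>{(c, \<phi> c)}. inner d z \<le> b)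
      \<and> (\<forall>z\<in>{z. \<phi> (fst z) < snd z}. b \<le> inner d z)"
  proof (rule separating_hyperplane_sets)
    have "(c, \<phi> c + 1) \<in> {z. \<phi> (fst z) < snd z}" by simp
    then show "{z. \<phi> (fst z) < snd z} \<noteq> {}" by blast
  qed (use convex_strict_epigraph[OF assms] in auto)
  then obtain d :: "'a \<times> real" and b where "d \<noteq> 0" and "inner d (c, \<phi> c) \<le> b"
    and sep: "\<And>z. \<phi> (fst z) < snd z \<Longrightarrow> b \<le> inner d z"
    by auto
  obtain a s where d: "d = (a, s)" by fastforce
  have below: "inner a c + s * \<phi> c \<le> inner a y + s * t" if "\<phi> y < t" for y t
    using \<open>inner d (c, \<phi> c) \<le> b\<close> sep[of "(y, t)"] that by (simp add: d inner_Pair)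
  \<comment> \<open>The hyperplane is not vertical, since the strict epigraph lies over every point.\<close>
  have "s > 0"
  proof (rule ccontr)
    assume "\<not> s > 0"
    moreover have "s \<ge> 0" using below[of c "\<phi> c + 1"] by (simp add: algebra_simps)
    ultimately have "s = 0" by simp
    then have "inner a a \<le> 0" using below[of "c - a" "\<phi> (c - a) + 1"] by (simp add: inner_diff_right)
    then have "a = 0" by (metis inner_eq_zero_iff inner_ge_zero order_antisym)
    then show False using \<open>d \<noteq> 0\<close> \<open>s = 0\<close> by (simp add: d zero_prod_def)
  qed
  have "\<phi> c + inner (- (1 / s) *\<^sub>R a) (y - c) \<le> \<phi> y" for y
  proof -
    have "s * \<phi> c \<le> inner a (y - c) + s * \<phi> y"
    proof (rule field_le_epsilon)
      fix e :: real assume "e > 0"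
      then show "s * \<phi> c \<le> inner a (y - c) + s * \<phi> y + e"
        using below[of y "\<phi> y + e / s"] \<open>s > 0\<close> by (simp add: inner_diff_right algebra_simps)
    qed
    then show ?thesis using \<open>s > 0\<close> by (simp add: field_simps inner_diff_right)
  qed
  then show ?thesis by (rule that)
qed

lemma convex_on_norm_power2: "convex_on UNIV (\<lambda>y::'a::real_normed_vector. (norm y)\<^sup>2)"
  unfolding convex_on_def
proof (intro conjI convex_UNIV ballI allI impI)
  fix x y :: 'a and u v :: real
  assume uv: "0 \<le> u" "0 \<le> v" "u + v = 1"
  have "norm (u *\<^sub>R x + v *\<^sub>R y) \<le> u * norm x + v * norm y"
    using norm_triangle_ineq[of "u *\<^sub>R x" "v *\<^sub>R y"] uv by simp
  then have "(norm (u *\<^sub>R x + v *\<^sub>R y))\<^sup>2 \<le> (u * norm x + v * norm y)\<^sup>2"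
    by (simp add: power_mono)
  also have "\<dots> \<le> u * (norm x)\<^sup>2 + v * (norm y)\<^sup>2"
    using convex_power2 uv unfolding convex_on_def by auto
  finally show "(norm (u *\<^sub>R x + v *\<^sub>R y))\<^sup>2 \<le> u * (norm x)\<^sup>2 + v * (norm y)\<^sup>2" .
qed

lemma (in prob_space) jensens_inequality_euclidean:
  fixes \<phi> :: "'b::euclidean_space \<Rightarrow> real"
  assumes "convex_on UNIV \<phi>" and "integrable M h" and "integrable M (\<lambda>x. \<phi> (h x))"
  shows "\<phi> (\<integral>x. h x \<partial>M) \<le> (\<integral>x. \<phi> (h x) \<partial>M)"
proof -
  define c where "c = (\<integral>x. h x \<partial>M)"
  obtain a where a: "\<And>y. \<phi> c + inner a (y - c) \<le> \<phi> y"
    using convex_on_subgradient[OF assms(1)] by blast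
  have "(\<integral>x. \<phi> c + inner a (h x - c) \<partial>M) \<le> (\<integral>x. \<phi> (h x) \<partial>M)"
    using a assms(2,3) by (intro integral_mono) (auto simp: inner_diff_right)
  moreover have "(\<integral>x. \<phi> c + inner a (h x - c) \<partial>M) = \<phi> c"
    using assms(2) by (simp add: c_def inner_diff_right prob_space)
  ultimately show ?thesis by (simp add: c_def)
qed

lemma borel_measurable_vec_nth[measurable (raw)]:
  fixes F :: "'a \<Rightarrow> real^'n"
  shows "F \<in> borel_measurable M \<Longrightarrow> (\<lambda>x. F x $ i) \<in> borel_measurable M"
  using measurable_compose[OF _ borel_measurable_nth] .

lemma abs_vec_nth_mult_le_norm_power2:
  fixes v :: "real^'n"
  shows "\<bar>v $ i * v $ j\<bar> \<le> (norm v)\<^sup>2"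
  unfolding abs_mult power2_eq_square
  by (intro mult_mono component_le_norm_cart) auto

lemma (in finite_measure) square_integrable_imp_integrable_norm:
  fixes h :: "'a \<Rightarrow> 'b::{banach, second_countable_topology}"
  assumes [measurable]: "h \<in> borel_measurable M" and "integrable M (\<lambda>x. (norm (h x))\<^sup>2)"
  shows "integrable M h"
  using square_integrable_imp_integrable[of "\<lambda>x. norm (h x)"] assms
  by (simp add: integrable_norm_iff)

lemma square_integrable_imp_integrable_nth_mult:
  fixes h :: "'a \<Rightarrow> real^'n"
  assumes "h \<in> borel_measurable M" and "integrable M (\<lambda>x. (norm (h x))\<^sup>2)"
  shows "integrable M (\<lambda>x. h x $ i * h x $ j)"
  using assms(2) by (rule Bochner_Integration.integrable_bound)
    (use assms(1) abs_vec_nth_mult_le_norm_power2 in \<open>auto intro: order_trans[OF _ abs_ge_self]\<close>)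

lemma bounded_linear_axis: "bounded_linear (axis i :: 'a::real_normed_vector \<Rightarrow> 'a^'n)"
proof (rule bounded_linear_intro[where K = 1])
  fix x y :: 'a and r :: real
  show "axis i (x + y) = axis i x + axis i y" "axis i (r *\<^sub>R x) = r *\<^sub>R axis i x"
    by (simp_all add: axis_def vec_eq_iff)
  have "norm (axis i x :: 'a^'n) \<le> (\<Sum>j\<in>UNIV. norm (axis i x $ j))"
    unfolding norm_vec_def by (rule L2_set_le_sum) simp
  also have "\<dots> = norm x"
    by (simp add: axis_def if_distrib cong: if_cong)
  finally show "norm (axis i x :: 'a^'n) \<le> norm x * 1" by simp
qed

lemma integrable_vec_componentwise:
  fixes F :: "'a \<Rightarrow> 'b::euclidean_space^'n"
  assumes "\<And>i. integrable M (\<lambda>x. F x $ i)"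
  shows "integrable M F"
proof -
  have "integrable M (\<lambda>x. \<Sum>i\<in>UNIV. axis i (F x $ i))"
  proof (rule Bochner_Integration.integrable_sum)
    fix i
    show "integrable M (\<lambda>x. axis i (F x $ i))"
      using integrable_bounded_linear[OF bounded_linear_axis assms, of i i] .
  qed
  moreover have "(\<Sum>i\<in>UNIV. axis i (v $ i)) = v" for v :: "'b^'n"
    by (simp add: vec_eq_iff axis_def sum_component if_distrib cong: if_cong)
  ultimately show ?thesis by simp
qed

lemma
  fixes F :: "'a \<Rightarrow> 'b::euclidean_space^'n"
  assumes "integrable M F"
  shows integrable_vec_nth: "integrable M (\<lambda>x. F x $ i)"
    and integral_vec_nth: "(\<integral>x. F x $ i \<partial>M) = (\<integral>x. F x \<partial>M) $ i"
  using integrable_bounded_linear[OF bounded_linear_vec_nth assms]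
    integral_bounded_linear[OF bounded_linear_vec_nth assms] by auto

lemma integrable_between_AE:
  fixes h :: "'a \<Rightarrow> real"
  assumes "integrable M l" "integrable M u" "h \<in> borel_measurable M"
    and "AE x in M. l x \<le> h x \<and> h x \<le> u x"
  shows "integrable M h"
proof (rule Bochner_Integration.integrable_bound)
  show "integrable M (\<lambda>x. \<bar>l x\<bar> + \<bar>u x\<bar>)" using assms(1,2) by simp
  show "AE x in M. norm (h x) \<le> norm (\<bar>l x\<bar> + \<bar>u x\<bar>)"
    using assms(4) by eventually_elim auto
qed (use assms(3) in simp)

lemma (in prob_space) cov_mat_nth_eq:
  fixes h :: "'a \<Rightarrow> real^'n"
  assumes "h \<in> borel_measurable M" and "integrable M (\<lambda>x. (norm (h x))\<^sup>2)"
  shows "cov_mat M h $ i $ j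
    = (\<integral>x. h x $ i * h x $ j \<partial>M) - (\<integral>x. h x \<partial>M) $ i * (\<integral>x. h x \<partial>M) $ j"
proof -
  have h: "integrable M h" using square_integrable_imp_integrable_norm[OF assms] .
  note nth = integrable_vec_nth[OF h] integral_vec_nth[OF h]
  define m where "m k = (\<integral>x. h x \<partial>M) $ k" for k
  have "cov_mat M h $ i $ j
      = (\<integral>x. h x $ i * h x $ j - m j * h x $ i - (m i * h x $ j - m i * m j) \<partial>M)"
    by (simp add: cov_mat_def nth m_def algebra_simps)
  also have "\<dots> = (\<integral>x. h x $ i * h x $ j \<partial>M) - m i * m j"
    using nth square_integrable_imp_integrable_nth_mult[OF assms] by (simp add: m_def prob_space)
  finally show ?thesis by (simp add: m_def)
qed

locale invariant_action =
  fixes P :: "'x measure" and Q :: "'g measure" and act :: "'g \<Rightarrow> 'x \<Rightarrow> 'x"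
  assumes prob_space_P: "prob_space P" and prob_space_Q: "prob_space Q"
    and measurable_act: "(\<lambda>(g, x). act g x) \<in> Q \<Otimes>\<^sub>M P \<rightarrow>\<^sub>M P"
    and distr_act: "AE g in Q. distr P P (act g) = P"
begin

sublocale pair_prob_space P Q
  using prob_space_P prob_space_Q
  by (simp add: pair_prob_space_def pair_sigma_finite_def prob_space_imp_sigma_finite)

lemma measurable_act_comp[measurable (raw)]:
  "a \<in> N \<rightarrow>\<^sub>M Q \<Longrightarrow> b \<in> N \<rightarrow>\<^sub>M P \<Longrightarrow> (\<lambda>z. act (a z) (b z)) \<in> N \<rightarrow>\<^sub>M P"
  using measurable_compose[OF measurable_Pair measurable_act] by simp

lemma measurable_act_left: "g \<in> space Q \<Longrightarrow> act g \<in> P \<rightarrow>\<^sub>M P"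
  using measurable_Pair2[OF measurable_act] by simp

lemma measurable_act_right: "x \<in> space P \<Longrightarrow> (\<lambda>g. act g x) \<in> Q \<rightarrow>\<^sub>M P"
  using measurable_Pair1[OF measurable_act] by simp

lemma nn_integral_act:
  assumes [measurable]: "h \<in> borel_measurable P"
  shows "(\<integral>\<^sup>+ z. h (act (snd z) (fst z)) \<partial>(P \<Otimes>\<^sub>M Q)) = (\<integral>\<^sup>+ x. h x \<partial>P)"
proof -
  have "(\<integral>\<^sup>+ z. h (act (snd z) (fst z)) \<partial>(P \<Otimes>\<^sub>M Q))
      = (\<integral>\<^sup>+ g. (\<integral>\<^sup>+ x. h (act g x) \<partial>P) \<partial>Q)"
    using nn_integral_snd[of "\<lambda>z. h (act (snd z) (fst z))"] by simp
  also have "\<dots> = (\<integral>\<^sup>+ g. (\<integral>\<^sup>+ x. h x \<partial>P) \<partial>Q)"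
  proof (intro nn_integral_cong_AE)
    show "AE g in Q. (\<integral>\<^sup>+ x. h (act g x) \<partial>P) = (\<integral>\<^sup>+ x. h x \<partial>P)"
      using distr_act AE_space
    proof eventually_elim
      case (elim g)
      then show ?case using nn_integral_distr[OF measurable_act_left[of g], of h] by simp
    qed
  qed
  finally show ?thesis by (simp add: M2.emeasure_space_1)
qed

lemma integrable_act_iff:
  fixes h :: "'x \<Rightarrow> 'a::{banach, second_countable_topology}"
  assumes [measurable]: "h \<in> borel_measurable P"
  shows "integrable (P \<Otimes>\<^sub>M Q) (\<lambda>(x, g). h (act g x)) \<longleftrightarrow> integrable P h"
  using nn_integral_act[of "\<lambda>x. ennreal (norm (h x))"]
  by (simp add: integrable_iff_bounded case_prod_beta)

lemma
  fixes h :: "'x \<Rightarrow> 'a::{banach, second_countable_topology}"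
  assumes "integrable P h"
  shows AE_integrable_act: "AE x in P. integrable Q (\<lambda>g. h (act g x))"
    and integrable_integral_act: "integrable P (\<lambda>x. \<integral>g. h (act g x) \<partial>Q)"
    and integral_integral_act: "(\<integral>x. (\<integral>g. h (act g x) \<partial>Q) \<partial>P) = (\<integral>x. h x \<partial>P)"
proof -
  have h[measurable]: "h \<in> borel_measurable P" using assms by (rule borel_measurable_integrable)
  have int: "integrable (P \<Otimes>\<^sub>M Q) (\<lambda>(x, g). h (act g x))"
    using assms integrable_act_iff[OF h] by simp
  show "AE x in P. integrable Q (\<lambda>g. h (act g x))"
    using AE_integrable_fst'[OF int] by simp
  show "integrable P (\<lambda>x. \<integral>g. h (act g x) \<partial>Q)"
    using integrable_fst'[OF int] by simp
  have "(\<integral>x. (\<integral>g. h (act g x) \<partial>Q) \<partial>P) = (\<integral>g. (\<integral>x. h (act g x) \<partial>P) \<partial>Q)"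
    using integral_fst'[OF int] integral_snd[of "\<lambda>x g. h (act g x)"] int by simp
  also have "\<dots> = (\<integral>g. (\<integral>x. h x \<partial>P) \<partial>Q)"
  proof (intro integral_cong_AE)
    show "AE g in Q. (\<integral>x. h (act g x) \<partial>P) = (\<integral>x. h x \<partial>P)"
      using distr_act AE_space
    proof eventually_elim
      case (elim g)
      then show ?case using integral_distr[OF measurable_act_left[of g], of h] by simp
    qed
  qed measurable
  finally show "(\<integral>x. (\<integral>g. h (act g x) \<partial>Q) \<partial>P) = (\<integral>x. h x \<partial>P)"
    by (simp add: M2.prob_space)
qed

lemma borel_measurable_orbit_avg:
  assumes [measurable]: "F \<in> borel_measurable P"
  shows "orbit_avg Q act F \<in> borel_measurable P"
  unfolding orbit_avg_def by measurable

lemma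
  assumes "integrable P F"
  shows integrable_orbit_avg: "integrable P (orbit_avg Q act F)"
    and integral_orbit_avg: "(\<integral>x. orbit_avg Q act F x \<partial>P) = (\<integral>x. F x \<partial>P)"
  using integrable_integral_act[OF assms] integral_integral_act[OF assms]
  unfolding orbit_avg_def by simp_all

lemma AE_orbit_avg_nth:
  assumes "integrable P F"
  shows "AE x in P. orbit_avg Q act F x $ i = (\<integral>g. F (act g x) $ i \<partial>Q)"
  using AE_integrable_act[OF assms] by eventually_elim (simp add: orbit_avg_def integral_vec_nth)

lemma
  fixes \<phi> :: "real^'k \<Rightarrow> real"
  assumes \<phi>: "convex_on UNIV \<phi>" and F: "integrable P F"
    and \<phi>F: "integrable P (\<lambda>x. \<phi> (F x))"
  shows integrable_convex_orbit_avg: "integrable P (\<lambda>x. \<phi> (orbit_avg Q act F x))"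
    and integral_convex_orbit_avg_le:
      "(\<integral>x. \<phi> (orbit_avg Q act F x) \<partial>P) \<le> (\<integral>x. \<phi> (F x) \<partial>P)"
proof -
  have [measurable]: "\<phi> \<in> borel_measurable borel" "F \<in> borel_measurable P"
    using convex_on_continuous[OF open_UNIV \<phi>] F
    by (auto intro: borel_measurable_continuous_onI)
  define H where "H x = (\<integral>g. \<phi> (F (act g x)) \<partial>Q)" for x
  have jensen: "AE x in P. \<phi> (orbit_avg Q act F x) \<le> H x"
    using AE_integrable_act[OF F] AE_integrable_act[OF \<phi>F]
    by eventually_elim (auto simp: H_def orbit_avg_def intro: M2.jensens_inequality_euclidean[OF \<phi>])
  obtain a where a: "\<And>y. \<phi> 0 + inner a (y - 0) \<le> \<phi> y"
    using convex_on_subgradient[OF \<phi>] by blast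
  show int: "integrable P (\<lambda>x. \<phi> (orbit_avg Q act F x))"
  proof (rule integrable_between_AE)
    show "integrable P (\<lambda>x. \<phi> 0 + inner a (orbit_avg Q act F x))"
      using integrable_orbit_avg[OF F] by simp
    show "integrable P H" unfolding H_def by (rule integrable_integral_act[OF \<phi>F])
    show "AE x in P. \<phi> 0 + inner a (orbit_avg Q act F x) \<le> \<phi> (orbit_avg Q act F x)
        \<and> \<phi> (orbit_avg Q act F x) \<le> H x"
      using jensen by eventually_elim (metis a diff_zero)
  qed (use borel_measurable_orbit_avg in measurable)
  have "(\<integral>x. \<phi> (orbit_avg Q act F x) \<partial>P) \<le> (\<integral>x. H x \<partial>P)"
    using int integrable_integral_act[OF \<phi>F] jensen unfolding H_def by (rule integral_mono_AE)
  then show "(\<integral>x. \<phi> (orbit_avg Q act F x) \<partial>P) \<le> (\<integral>x. \<phi> (F x) \<partial>P)"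
    unfolding H_def integral_integral_act[OF \<phi>F] .
qed

lemma square_integrable_orbit_avg:
  fixes F :: "'x \<Rightarrow> real^'k"
  assumes "F \<in> borel_measurable P" and "integrable P (\<lambda>x. (norm (F x))\<^sup>2)"
  shows "integrable P (\<lambda>x. (norm (orbit_avg Q act F x))\<^sup>2)"
  using integrable_convex_orbit_avg[OF convex_on_norm_power2
      M1.square_integrable_imp_integrable_norm[OF assms] assms(2)] .

lemma
  fixes F :: "'x \<Rightarrow> real^'k"
  assumes F[measurable]: "F \<in> borel_measurable P" and L2: "integrable P (\<lambda>x. (norm (F x))\<^sup>2)"
  shows integrable_cov_mat_act_nth: "integrable P (\<lambda>x. cov_mat Q (\<lambda>g. F (act g x)) $ i $ j)"
    and integral_cov_mat_act_nth: "(\<integral>x. cov_mat Q (\<lambda>g. F (act g x)) $ i $ j \<partial>P)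
      = (\<integral>x. F x $ i * F x $ j \<partial>P)
        - (\<integral>x. orbit_avg Q act F x $ i * orbit_avg Q act F x $ j \<partial>P)"
proof -
  let ?S = "\<lambda>x. \<integral>g. F (act g x) $ i * F (act g x) $ j \<partial>Q"
  let ?m = "\<lambda>x. orbit_avg Q act F x $ i * orbit_avg Q act F x $ j"
  have [measurable]: "orbit_avg Q act F \<in> borel_measurable P"
    by (rule borel_measurable_orbit_avg[OF F])
  note avg_L2 = square_integrable_orbit_avg[OF F L2]
  have FF: "integrable P (\<lambda>x. F x $ i * F x $ j)"
    using square_integrable_imp_integrable_nth_mult[OF F L2] .
  have int: "integrable P (\<lambda>x. ?S x - ?m x)"
    using integrable_integral_act[OF FF] square_integrable_imp_integrable_nth_mult[OF _ avg_L2] by simp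
  have cov: "AE x in P. cov_mat Q (\<lambda>g. F (act g x)) $ i $ j = ?S x - ?m x"
    using AE_integrable_act[OF L2] AE_space
  proof eventually_elim
    case (elim x)
    have "(\<lambda>g. F (act g x)) \<in> borel_measurable Q"
      using measurable_comp[OF measurable_act_right[of x] F] elim by (simp add: comp_def)
    then show ?case
      using M2.cov_mat_nth_eq elim unfolding orbit_avg_def by blast
  qed
  have [measurable]: "(\<lambda>x. cov_mat Q (\<lambda>g. F (act g x)) $ i $ j) \<in> borel_measurable P"
    unfolding cov_mat_def vec_lambda_beta by measurable
  show "integrable P (\<lambda>x. cov_mat Q (\<lambda>g. F (act g x)) $ i $ j)"
    using int cov by (subst integrable_cong_AE) auto
  have "(\<integral>x. cov_mat Q (\<lambda>g. F (act g x)) $ i $ j \<partial>P) = (\<integral>x. ?S x - ?m x \<partial>P)"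
    using cov by (intro integral_cong_AE) auto
  also have "\<dots> = (\<integral>x. F x $ i * F x $ j \<partial>P) - (\<integral>x. ?m x \<partial>P)"
    using integrable_integral_act[OF FF] square_integrable_imp_integrable_nth_mult[OF _ avg_L2]
    by (simp add: integral_integral_act[OF FF])
  finally show "(\<integral>x. cov_mat Q (\<lambda>g. F (act g x)) $ i $ j \<partial>P)
      = (\<integral>x. F x $ i * F x $ j \<partial>P) - (\<integral>x. ?m x \<partial>P)" .
qed

lemma law_of_total_covariance:
  fixes F :: "'x \<Rightarrow> real^'k"
  assumes F: "F \<in> borel_measurable P" and L2: "integrable P (\<lambda>x. (norm (F x))\<^sup>2)"
  shows "cov_mat P F
    = cov_mat P (orbit_avg Q act F) + (\<integral>x. cov_mat Q (\<lambda>g. F (act g x)) \<partial>P)"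
proof -
  have cov_Q: "integrable P (\<lambda>x. cov_mat Q (\<lambda>g. F (act g x)))"
    by (intro integrable_vec_componentwise integrable_cov_mat_act_nth[OF F L2])
  have "cov_mat P F $ i $ j = cov_mat P (orbit_avg Q act F) $ i $ j
      + (\<integral>x. cov_mat Q (\<lambda>g. F (act g x)) \<partial>P) $ i $ j" for i j
    using M1.cov_mat_nth_eq[OF F L2, of i j]
      M1.cov_mat_nth_eq[OF borel_measurable_orbit_avg[OF F] square_integrable_orbit_avg[OF F L2], of i j]
      integral_orbit_avg[OF M1.square_integrable_imp_integrable_norm[OF F L2]]
      integral_cov_mat_act_nth[OF F L2, of i j]
      integral_vec_nth[OF cov_Q] integral_vec_nth[OF integrable_vec_nth[OF cov_Q]]
    by simp
  then show ?thesis by (simp add: vec_eq_iff)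
qed

end

lemma (in group_action) act_mem_iff_of_orbit_closed:
  assumes "\<forall>y\<in>A. orbit G \<phi> y \<subseteq> A" and "x \<in> E" and "g \<in> carrier G"
  shows "\<phi> g x \<in> A \<longleftrightarrow> x \<in> A"
proof
  assume "\<phi> g x \<in> A"
  moreover have "x = \<phi> (inv g) (\<phi> g x)"
    using orbit_sym_aux[OF assms(3,2)] by simp
  ultimately show "x \<in> A"
    using assms(1,3) group_hom unfolding orbit_def group_hom_def by (fastforce intro: group.inv_closed)
qed (use assms in \<open>auto simp: orbit_def\<close>)

lemma space_orbit_sigma: "space (orbit_sigma P G act) = space P"
  unfolding orbit_sigma_def by (rule space_measure_of) (auto dest: sets.sets_into_space)

lemma sets_orbit_sigma:
  assumes "group_action G (space P) act"
  shows "sets (orbit_sigma P G act) = {A \<in> sets P. \<forall>x\<in>A. orbit G act x \<subseteq> A}"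
proof -
  interpret group_action G "space P" act by (rule assms)
  let ?I = "{A \<in> sets P. \<forall>x\<in>A. orbit G act x \<subseteq> A}"
  have "sigma_algebra (space P) ?I"
    unfolding sigma_algebra_iff2
  proof (intro conjI allI ballI impI)
    fix A assume A: "A \<in> ?I"
    have "act g x \<notin> A" if "x \<in> space P - A" "g \<in> carrier G" for x g
      using act_mem_iff_of_orbit_closed[of A x g] A that by auto
    then show "space P - A \<in> ?I"
      using A element_image by (auto simp: orbit_def)
  qed (auto dest: sets.sets_into_space)
  then show ?thesis
    unfolding orbit_sigma_def by (simp add: sigma_algebra.sets_measure_of_eq)
qed

lemma subalgebra_orbit_sigma:
  "group_action G (space P) act \<Longrightarrow> subalgebra P (orbit_sigma P G act)"
  by (auto simp: subalgebra_def sets_orbit_sigma space_orbit_sigma)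

lemma measurable_orbit_sigmaI:
  assumes "group_action G (space P) act" and "F \<in> P \<rightarrow>\<^sub>M N"
    and "\<And>x g. x \<in> space P \<Longrightarrow> g \<in> carrier G \<Longrightarrow> F (act g x) = F x"
  shows "F \<in> orbit_sigma P G act \<rightarrow>\<^sub>M N"
proof (rule measurableI)
  interpret group_action G "space P" act by (rule assms)
  fix B assume "B \<in> sets N"
  then show "F -` B \<inter> space (orbit_sigma P G act) \<in> sets (orbit_sigma P G act)"
    using measurable_sets[OF assms(2)] assms(3) element_image
    by (auto simp: sets_orbit_sigma[OF assms(1)] space_orbit_sigma orbit_def)
qed (use assms(2) in \<open>auto simp: space_orbit_sigma measurable_space\<close>)

lemma measurable_continuous_map_openin_sigma:
  assumes "space M = topspace X" and "sets N = sigma_sets (topspace Y) {U. openin Y U}"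
    and "sets M = sigma_sets (topspace X) {U. openin X U}" and f: "continuous_map X Y f"
  shows "f \<in> M \<rightarrow>\<^sub>M N"
proof (rule measurable_sigma_sets[OF assms(2)])
  fix U assume "U \<in> {U. openin Y U}"
  then have "openin X {x \<in> topspace X. f x \<in> U}"
    using f by (simp add: continuous_map_def)
  then show "f -` U \<inter> space M \<in> sets M"
    using assms(1,3) by (auto simp: Int_def conj_commute)
qed (use f assms(1) in \<open>auto dest: openin_subset simp: continuous_map_def\<close>)

lemma (in group) vimage_mult_right_eq_r_coset:
  assumes "A \<subseteq> carrier G" and "h \<in> carrier G"
  shows "(\<lambda>g. g \<otimes> h) -` A \<inter> carrier G = A #> inv h"
proof (intro equalityI subsetI)
  fix g assume "g \<in> (\<lambda>g. g \<otimes> h) -` A \<inter> carrier G"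
  moreover have "g = (g \<otimes> h) \<otimes> inv h" if "g \<in> carrier G"
    using that assms(2) by (simp add: m_assoc)
  ultimately show "g \<in> A #> inv h" unfolding r_coset_def by blast
next
  fix g assume "g \<in> A #> inv h"
  then obtain a where "a \<in> A" "g = a \<otimes> inv h" unfolding r_coset_def by blast
  then show "g \<in> (\<lambda>g. g \<otimes> h) -` A \<inter> carrier G"
    using assms by (auto simp: m_assoc)
qed

lemma
  assumes G: "compact_topological_group G T" and Q: "haar_probability G T Q" and h: "h \<in> carrier G"
  shows measurable_right_translation: "(\<lambda>g. g \<otimes>\<^bsub>G\<^esub> h) \<in> Q \<rightarrow>\<^sub>M Q"
    and distr_right_translation: "distr Q Q (\<lambda>g. g \<otimes>\<^bsub>G\<^esub> h) = Q"
proof -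
  interpret group G using G by (simp add: compact_topological_group_def)
  interpret prob_space Q using Q by (simp add: haar_probability_def)
  have space: "space Q = carrier G" "topspace T = carrier G"
    and sets: "sets Q = sigma_sets (topspace T) {U. openin T U}"
    using G Q by (auto simp: haar_probability_def compact_topological_group_def)
  have "continuous_map T (prod_topology T T) (\<lambda>g. (g, h))"
    using h space by (intro continuous_map_pairedI) auto
  then have "continuous_map T T ((\<lambda>(a, b). a \<otimes>\<^bsub>G\<^esub> b) \<circ> (\<lambda>g. (g, h)))"
    using G by (intro continuous_map_compose) (auto simp: compact_topological_group_def)
  then show meas: "(\<lambda>g. g \<otimes>\<^bsub>G\<^esub> h) \<in> Q \<rightarrow>\<^sub>M Q"
    using space sets by (intro measurable_continuous_map_openin_sigma) (auto simp: o_def)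
  show "distr Q Q (\<lambda>g. g \<otimes>\<^bsub>G\<^esub> h) = Q"
  proof (rule measure_eqI)
    fix A assume "A \<in> sets (distr Q Q (\<lambda>g. g \<otimes>\<^bsub>G\<^esub> h))"
    then have A: "A \<in> sets Q" "A \<subseteq> carrier G"
      using sets.sets_into_space space by auto
    have "measure Q (A #>\<^bsub>G\<^esub> inv\<^bsub>G\<^esub> h) = measure Q A"
      using Q h A by (simp add: haar_probability_def)
    then show "emeasure (distr Q Q (\<lambda>g. g \<otimes>\<^bsub>G\<^esub> h)) A = emeasure Q A"
      using emeasure_distr[OF meas A(1)] vimage_mult_right_eq_r_coset[OF A(2) h] space
      by (simp add: emeasure_eq_measure)
  qed simp
qed

locale haar_action = invariant_action P Q act
  for P :: "'x measure" and Q :: "'g measure" and act :: "'g \<Rightarrow> 'x \<Rightarrow> 'x" +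
  fixes G :: "('g, 'b) monoid_scheme" and T :: "'g topology"
  assumes compact_topological_group: "compact_topological_group G T"
    and haar_probability: "haar_probability G T Q"
    and group_action: "group_action G (space P) act"
begin

lemma space_Q: "space Q = carrier G"
  using haar_probability compact_topological_group
  by (simp add: haar_probability_def compact_topological_group_def)

lemma orbit_avg_act:
  assumes [measurable]: "F \<in> borel_measurable P" and x: "x \<in> space P" and h: "h \<in> carrier G"
  shows "orbit_avg Q act F (act h x) = orbit_avg Q act F x"
proof -
  interpret group_action G "space P" act by (rule group_action)
  note right = measurable_right_translation[OF compact_topological_group haar_probability h]
    distr_right_translation[OF compact_topological_group haar_probability h]
  have "orbit_avg Q act F (act h x) = (\<integral>g. F (act (g \<otimes>\<^bsub>G\<^esub> h) x) \<partial>Q)"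
    unfolding orbit_avg_def using x h space_Q
    by (intro Bochner_Integration.integral_cong) (auto simp: composition_rule)
  also have "\<dots> = (\<integral>g. F (act g x) \<partial>distr Q Q (\<lambda>g. g \<otimes>\<^bsub>G\<^esub> h))"
    using x by (intro integral_distr[symmetric] right(1))
      (auto intro: measurable_comp[OF measurable_act_right])
  finally show ?thesis by (simp add: right(2) orbit_avg_def)
qed

lemma measurable_orbit_avg_nth_orbit_sigma:
  assumes "F \<in> borel_measurable P"
  shows "(\<lambda>x. orbit_avg Q act F x $ i) \<in> borel_measurable (orbit_sigma P G act)"
  using borel_measurable_orbit_avg[OF assms]
  by (intro measurable_orbit_sigmaI[OF group_action]) (auto simp: orbit_avg_act[OF assms])

lemma orbit_avg_eq_real_cond_exp:
  assumes F: "integrable P F"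
  shows "AE x in P. \<forall>i.
    orbit_avg Q act F x $ i = real_cond_exp P (orbit_sigma P G act) (\<lambda>y. F y $ i) x"
proof -
  interpret sigma_finite_subalgebra P "orbit_sigma P G act"
    using subalgebra_orbit_sigma[OF group_action] M1.finite_measure_axioms
    by (intro finite_measure_subalgebra_is_sigma_finite finite_measure_subalgebra.intro)
      (auto simp: finite_measure_subalgebra_axioms_def)
  have [measurable]: "F \<in> borel_measurable P" using F by (rule borel_measurable_integrable)
  have "AE x in P.
    real_cond_exp P (orbit_sigma P G act) (\<lambda>y. F y $ i) x = orbit_avg Q act F x $ i" for i
  proof (rule real_cond_exp_charact)
    fix A assume A: "A \<in> sets (orbit_sigma P G act)"
    then have [measurable]: "A \<in> sets P" and closed: "\<forall>x\<in>A. orbit G act x \<subseteq> A"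
      using sets_orbit_sigma[OF group_action] by auto
    have invariant: "indicator A (act g x) = (indicator A x :: real)"
      if "x \<in> space P" "g \<in> space Q" for x g
      using group_action.act_mem_iff_of_orbit_closed[OF group_action closed that(1)] that(2) space_Q
      by (simp add: indicator_def)
    have AF: "integrable P (\<lambda>y. indicator A y * F y $ i)"
      using integrable_real_mult_indicator[OF _ integrable_vec_nth[OF F]] by (simp add: mult.commute)
    have "(\<integral>x. indicator A x * orbit_avg Q act F x $ i \<partial>P)
        = (\<integral>x. (\<integral>g. indicator A (act g x) * F (act g x) $ i \<partial>Q) \<partial>P)"
    proof (intro integral_cong_AE)
      show "AE x in P. indicator A x * orbit_avg Q act F x $ i
          = (\<integral>g. indicator A (act g x) * F (act g x) $ i \<partial>Q)"
        using AE_orbit_avg_nth[OF F, of i] AE_space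
      proof eventually_elim
        case (elim x)
        then show ?case by (simp add: invariant cong: Bochner_Integration.integral_cong)
      qed
    qed (use borel_measurable_orbit_avg in measurable)
    also have "\<dots> = (\<integral>y. indicator A y * F y $ i \<partial>P)"
      by (rule integral_integral_act[OF AF])
    finally show "(LINT x:A|P. F x $ i) = (LINT x:A|P. orbit_avg Q act F x $ i)"
      by (simp add: set_lebesgue_integral_def)
  qed (use F in \<open>auto intro: integrable_vec_nth integrable_orbit_avg
      measurable_orbit_avg_nth_orbit_sigma borel_measurable_integrable\<close>)
  from AE_symmetric[OF this] show ?thesis unfolding AE_all_countable by blast
qed

end

theorem lemma4p1:
  fixes P :: "'x measure" and G :: "('g, 'b) monoid_scheme" and T :: "'g topology"
    and Q :: "'g measure" and act :: "'g \<Rightarrow> 'x \<Rightarrow> 'x" and f :: "'x \<Rightarrow> real^'k"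
  assumes P: "prob_space P"
    and G: "compact_topological_group G T"
    and Q: "haar_probability G T Q"
    and action: "group_action G (space P) act"
    and act_meas: "(\<lambda>(g, x). act g x) \<in> measurable (Q \<Otimes>\<^sub>M P) P"
    and invariance: "AE g in Q. distr P P (act g) = P"
    and f_meas: "f \<in> borel_measurable P"
    and L2_meas: "(\<lambda>(x, g). f (act g x)) \<in> borel_measurable (P \<Otimes>\<^sub>M Q)"
    and L2_int: "integrable (P \<Otimes>\<^sub>M Q) (\<lambda>(x, g). (norm (f (act g x)))\<^sup>2)"
  shows
    "(AE x in P. \<forall>i. orbit_avg Q act f x $ i
                       = real_cond_exp P (orbit_sigma P G act) (\<lambda>y. f y $ i) x)
     \<and> (LINT x|P. f x) = (LINT x|P. orbit_avg Q act f x)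
     \<and> cov_mat P f = cov_mat P (orbit_avg Q act f)
                     + (LINT x|P. cov_mat Q (\<lambda>g. f (act g x)))
     \<and> (\<forall>\<phi> :: real^'k \<Rightarrow> real. convex_on UNIV \<phi> \<longrightarrow>
          integrable P (\<lambda>x. \<phi> (f x)) \<longrightarrow>
          integrable P (\<lambda>x. \<phi> (orbit_avg Q act f x))
          \<and> (LINT x|P. \<phi> (f x)) \<ge> (LINT x|P. \<phi> (orbit_avg Q act f x)))"
proof -
  interpret haar_action P Q act G T
    using P G Q action act_meas invariance
    by (intro haar_action.intro invariant_action.intro haar_action_axioms.intro)
      (simp_all add: haar_probability_def)
  have L2: "integrable P (\<lambda>x. (norm (f x))\<^sup>2)"
    using L2_int integrable_act_iff[of "\<lambda>x. (norm (f x))\<^sup>2"] f_meas by simp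
  have f_int: "integrable P f"
    using M1.square_integrable_imp_integrable_norm[OF f_meas L2] .
  show ?thesis
    using orbit_avg_eq_real_cond_exp[OF f_int] integral_orbit_avg[OF f_int]
      law_of_total_covariance[OF f_meas L2]
      integrable_convex_orbit_avg[OF _ f_int] integral_convex_orbit_avg_le[OF _ f_int]
    by auto
qed

end
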